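(* The assignment $\sigma(V)=V$ and $\sigma([V\to X\leftarrow W])=[V\leftarrow V\times_X W\rightarrow W]$ (with $V\times_X W$ the pullback in $\mathcal{E}_q^{deg}$) gives a well-defined functor $\sigma:\mathcal{T}_q\to\mathcal{S}_q$, and $\sigma$ is monoidal with respect to the orthogonal sums $\perp$ on $\mathcal{T}_q$ and on $\mathcal{S}_q$.
   Context: All vector spaces over $\mathbb{F}_2$. $\mathcal{E}_q^{deg}$: objects finite-dimensional quadratic spaces (possibly degenerate), morphisms injective linear maps preserving quadratic forms; pullback of $\alpha:D\to V$, $\beta:D'\to V$ is $\alpha(D)\cap\beta(D')$ with restricted form. $\mathrm{Sp}(\mathcal{E}_q^{deg})$: morphisms spans $[V\leftarrow D\rightarrow W]$ up to iso of $D$, composed by pullback. $\mathcal{S}_q$: its full subcategory on non-degenerate spaces. $\mathcal{E}_q$: full subcategory of $\mathcal{E}_q^{deg}$ on non-degenerate spaces. Pseudo push-out of $f:V\to W=f(V)\perp V'$, $g:V\to X=g(V)\perp V''$ in $\mathcal{E}_q$: $V\perp V'\perp V''$ with maps $f(v)+v'\mapsto v+v'$, $g(v)+v''\mapsto v+v''$. $\mathcal{T}_q$: objects of $\mathcal{E}_q$; morphisms classes of cospans $[V\to X\leftarrow W]$ in $\mathcal{E}_q$ modulo the equivalence relation generated by existence of an $\mathcal{E}_q$-morphism between middle objects compatible with the legs; composition via pseudo push-out. The orthogonal sum on $\mathcal{T}_q$ (resp. $\mathcal{S}_q$) is $V\perp W$ on objects and componentwise orthogonal sum of cospans (resp. spans)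 on morphisms. *)

theory Defs
  imports Main "HOL-Library.Z2" "HOL-Library.Product_Plus"
begin

text \<open>
  An F_2-vector space is modelled as a finite subset S of an abelian group
  type 'a (the carrier) which contains 0, is closed under + and satisfies x + x = 0
  (an elementary abelian 2-group, i.e. exactly an F_2-vector space; F_2-linear maps are
  exactly additive maps).  Finite-dimensional = finite carrier.
\<close>

type_synonym 'a qspace = "'a set \<times> ('a \<Rightarrow> bit)"

definition f2space :: "'a::ab_group_add set \<Rightarrow> bool" where
  "f2space S \<longleftrightarrow> finite S \<and> 0 \<in> S \<and> (\<forall>x\<in>S. \<forall>y\<in>S. x + y \<in> S) \<and> (\<forall>x\<in>S. x + x = 0)"

definition polar :: "('a::ab_group_add \<Rightarrow> bit) \<Rightarrow> 'a \<Rightarrow> 'a \<Rightarrow> bit" where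
  "polar q x y = q (x + y) + q x + q y"

definition is_qspace :: "'a::ab_group_add qspace \<Rightarrow> bool" where
  "is_qspace V \<longleftrightarrow> f2space (fst V) \<and> snd V 0 = 0 \<and>
     (\<forall>x\<in>fst V. \<forall>y\<in>fst V. \<forall>z\<in>fst V.
        polar (snd V) (x + y) z = polar (snd V) x z + polar (snd V) y z)"

definition nondeg :: "'a::ab_group_add qspace \<Rightarrow> bool" where
  "nondeg V \<longleftrightarrow> (\<forall>x\<in>fst V. (\<forall>y\<in>fst V. polar (snd V) x y = 0) \<longrightarrow> x = 0)"

definition qmor :: "'a::ab_group_add qspace \<Rightarrow> 'b::ab_group_add qspace \<Rightarrow> ('a \<Rightarrow> 'b) \<Rightarrow> bool" where
  "qmor V W f \<longleftrightarrow> f ` fst V \<subseteq> fst W \<and> inj_on f (fst V) \<and>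
     (\<forall>x\<in>fst V. \<forall>y\<in>fst V. f (x + y) = f x + f y) \<and>
     (\<forall>x\<in>fst V. snd W (f x) = snd V x)"

definition nd_qspace :: "'a::ab_group_add qspace \<Rightarrow> bool" where
  "nd_qspace V \<longleftrightarrow> is_qspace V \<and> nondeg V"

definition orth_sum :: "'a::ab_group_add qspace \<Rightarrow> 'b::ab_group_add qspace \<Rightarrow> ('a \<times> 'b) qspace" where
  "orth_sum V W = (fst V \<times> fst W, \<lambda>(v, w). snd V v + snd W w)"

type_synonym ('d, 'v, 'w) span = "'d qspace \<times> ('d \<Rightarrow> 'v) \<times> ('d \<Rightarrow> 'w)"

type_synonym ('v, 'x, 'w) cospan = "('v \<Rightarrow> 'x) \<times> 'x qspace \<times> ('w \<Rightarrow> 'x)"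

definition is_Sq_span :: "'v::ab_group_add qspace \<Rightarrow> 'w::ab_group_add qspace \<Rightarrow>
    ('d::ab_group_add, 'v, 'w) span \<Rightarrow> bool" where
  "is_Sq_span V W s \<longleftrightarrow> (case s of (D, a, b) \<Rightarrow>
     nd_qspace V \<and> nd_qspace W \<and> is_qspace D \<and> qmor D V a \<and> qmor D W b)"

definition is_Tq_cospan :: "'v::ab_group_add qspace \<Rightarrow> 'w::ab_group_add qspace \<Rightarrow>
    ('v, 'x::ab_group_add, 'w) cospan \<Rightarrow> bool" where
  "is_Tq_cospan V W c \<longleftrightarrow> (case c of (f, X, g) \<Rightarrow>
     nd_qspace V \<and> nd_qspace W \<and> nd_qspace X \<and> qmor V X f \<and> qmor W X g)"

text \<open>Equality of morphisms in Sp(E_q^deg): spans identified up to isomorphism of D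
  compatible with the legs.\<close>
definition span_iso :: "('d::ab_group_add, 'v, 'w) span \<Rightarrow> ('e::ab_group_add, 'v, 'w) span \<Rightarrow> bool" where
  "span_iso s t \<longleftrightarrow> (case s of (D, a, b) \<Rightarrow> case t of (E, c, d) \<Rightarrow>
     (\<exists>\<phi>. bij_betw \<phi> (fst D) (fst E) \<and> qmor D E \<phi> \<and>
          (\<forall>x\<in>fst D. c (\<phi> x) = a x \<and> d (\<phi> x) = b x)))"

text \<open>One generating step of the equivalence relation on cospans: an E_q-morphism
  between the middle objects compatible with the legs.\<close>
definition cospan_step :: "'v::ab_group_add qspace \<Rightarrow> 'w::ab_group_add qspace \<Rightarrow>
    ('v, 'x::ab_group_add, 'w) cospan \<Rightarrow> ('v, 'y::ab_group_add, 'w) cospan \<Rightarrow> bool" where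
  "cospan_step V W c c' \<longleftrightarrow> (case c of (f, X, g) \<Rightarrow> case c' of (f', X', g') \<Rightarrow>
     (\<exists>\<phi>. qmor X X' \<phi> \<and> (\<forall>v\<in>fst V. \<phi> (f v) = f' v) \<and> (\<forall>w\<in>fst W. \<phi> (g w) = g' w)))"

definition id_span :: "'v qspace \<Rightarrow> ('v, 'v, 'v) span" where
  "id_span V = (V, id, id)"

definition id_cospan :: "'v qspace \<Rightarrow> ('v, 'v, 'v) cospan" where
  "id_cospan V = (id, V, id)"

definition pullback_obj :: "'w qspace \<Rightarrow> 'd set \<Rightarrow> ('d \<Rightarrow> 'w) \<Rightarrow> 'e set \<Rightarrow> ('e \<Rightarrow> 'w) \<Rightarrow> 'w qspace" where
  "pullback_obj W D \<alpha> D' \<beta> = (\<alpha> ` D \<inter> \<beta> ` D', snd W)"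

definition span_comp :: "'w qspace \<Rightarrow> ('d, 'v, 'w) span \<Rightarrow> ('e, 'w, 'u) span \<Rightarrow> ('w, 'v, 'u) span" where
  "span_comp W s t = (case s of (D, a, b) \<Rightarrow> case t of (D', c, d) \<Rightarrow>
     (pullback_obj W (fst D) b (fst D') c,
      a \<circ> inv_into (fst D) b,
      d \<circ> inv_into (fst D') c))"

definition sigma :: "'v qspace \<Rightarrow> 'w qspace \<Rightarrow> ('v, 'x, 'w) cospan \<Rightarrow> ('x, 'v, 'w) span" where
  "sigma V W c = (case c of (f, X, g) \<Rightarrow>
     (pullback_obj X (fst V) f (fst W) g, inv_into (fst V) f, inv_into (fst W) g))"

definition orth_compl :: "'w qspace \<Rightarrow> 'x::ab_group_add qspace \<Rightarrow> ('w \<Rightarrow> 'x) \<Rightarrow> 'x set" where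
  "orth_compl W X g = {x \<in> fst X. \<forall>w\<in>fst W. polar (snd X) x (g w) = 0}"

text \<open>Pseudo push-out of g: W -> X = g(W) \<perp> X', h: W -> Y = h(W) \<perp> Y':
  the object W \<perp> X' \<perp> Y' together with the maps
  g(w) + x' |-> (w, x', 0) and h(w) + y' |-> (w, 0, y').\<close>
definition pp_obj :: "'w::ab_group_add qspace \<Rightarrow> 'x::ab_group_add qspace \<Rightarrow> 'y::ab_group_add qspace \<Rightarrow>
    ('w \<Rightarrow> 'x) \<Rightarrow> ('w \<Rightarrow> 'y) \<Rightarrow> ('w \<times> 'x \<times> 'y) qspace" where
  "pp_obj W X Y g h = orth_sum W (orth_sum (orth_compl W X g, snd X) (orth_compl W Y h, snd Y))"

definition pp_left :: "'w::ab_group_add qspace \<Rightarrow> 'x::ab_group_add qspace \<Rightarrow> ('w \<Rightarrow> 'x) \<Rightarrow>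
    'x \<Rightarrow> 'w \<times> 'x \<times> 'y::ab_group_add" where
  "pp_left W X g x = (let w = (THE w. w \<in> fst W \<and> x - g w \<in> orth_compl W X g)
                      in (w, x - g w, 0))"

definition pp_right :: "'w::ab_group_add qspace \<Rightarrow> 'y::ab_group_add qspace \<Rightarrow> ('w \<Rightarrow> 'y) \<Rightarrow>
    'y \<Rightarrow> 'w \<times> 'x::ab_group_add \<times> 'y" where
  "pp_right W Y h y = (let w = (THE w. w \<in> fst W \<and> y - h w \<in> orth_compl W Y h)
                       in (w, 0, y - h w))"

definition cospan_comp :: "'w::ab_group_add qspace \<Rightarrow> ('v, 'x::ab_group_add, 'w) cospan \<Rightarrow>
    ('w, 'y::ab_group_add, 'u) cospan \<Rightarrow> ('v, 'w \<times> 'x \<times> 'y, 'u) cospan" where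
  "cospan_comp W c d = (case c of (f, X, g) \<Rightarrow> case d of (h, Y, k) \<Rightarrow>
     (pp_left W X g \<circ> f, pp_obj W X Y g h, pp_right W Y h \<circ> k))"

definition cospan_sum :: "('v1, 'x1::ab_group_add, 'w1) cospan \<Rightarrow> ('v2, 'x2::ab_group_add, 'w2) cospan \<Rightarrow>
    ('v1 \<times> 'v2, 'x1 \<times> 'x2, 'w1 \<times> 'w2) cospan" where
  "cospan_sum c d = (case c of (f1, X1, g1) \<Rightarrow> case d of (f2, X2, g2) \<Rightarrow>
     (map_prod f1 f2, orth_sum X1 X2, map_prod g1 g2))"

definition span_sum :: "('d1::ab_group_add, 'v1, 'w1) span \<Rightarrow> ('d2::ab_group_add, 'v2, 'w2) span \<Rightarrow>
    ('d1 \<times> 'd2, 'v1 \<times> 'v2, 'w1 \<times> 'w2) span" where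
  "span_sum s t = (case s of (D1, a1, b1) \<Rightarrow> case t of (D2, a2, b2) \<Rightarrow>
     (orth_sum D1 D2, map_prod a1 a2, map_prod b1 b2))"

end

theory Submission
  imports Defs
begin

text \<open>
  The pullback \<open>V \<times>\<^sub>X W = f(V) \<inter> g(W)\<close> is a subspace of \<open>X\<close> on which both legs can be
  inverted, so \<open>\<sigma>\<close> produces spans; an injective morphism of cospans \<open>X \<rightarrow> X'\<close> maps
  \<open>f(V) \<inter> g(W)\<close> bijectively onto \<open>f'(V) \<inter> g'(W)\<close>, so \<open>\<sigma>\<close> respects the equivalence of cospans.
  For composition, the point is that the image of a non-degenerate \<open>W\<close> splits off
  orthogonally, \<open>X = g(W) \<perp> g(W)\<^sup>\<perp>\<close>; in characteristic 2 this is proved by splitting off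
  hyperbolic pairs, by induction on \<open>|g(W)|\<close>. Consequently, in the pseudo push-out \<open>W \<perp> X' \<perp> Y'\<close> the
  images of \<open>V\<close> and \<open>U\<close> meet only in the summand \<open>W\<close>, namely in those \<open>w\<close> with
  \<open>g(w) \<in> f(V)\<close> and \<open>h(w) \<in> k(U)\<close>, which is also the apex of the composite span.
  Images and intersections commute with orthogonal sums, whence monoidality.
\<close>

lemma polar_commute: "polar q x y = polar q y x"
  unfolding polar_def by (simp only: add.commute[of x y]) (simp only: ac_simps)

lemma polar_zero_left: "q 0 = 0 \<Longrightarrow> polar q 0 y = 0"
  and polar_zero_right: "q 0 = 0 \<Longrightarrow> polar q y 0 = 0"
  by (simp_all add: polar_def)

context
  fixes X :: "'a::ab_group_add qspace"
  assumes X: "is_qspace X"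
begin

lemma qspace_finite: "finite (fst X)"
  and qspace_zero_mem: "0 \<in> fst X"
  and qspace_add_mem: "x \<in> fst X \<Longrightarrow> y \<in> fst X \<Longrightarrow> x + y \<in> fst X"
  and qspace_add_self: "x \<in> fst X \<Longrightarrow> x + x = 0"
  and qspace_form_zero: "snd X 0 = 0"
  and polar_add_left: "x \<in> fst X \<Longrightarrow> y \<in> fst X \<Longrightarrow> z \<in> fst X \<Longrightarrow>
         polar (snd X) (x + y) z = polar (snd X) x z + polar (snd X) y z"
  using X by (simp_all add: is_qspace_def f2space_def)

lemma qspace_diff_eq_add: "y \<in> fst X \<Longrightarrow> x - y = x + y"
proof -
  assume "y \<in> fst X"
  then have "- y = y"
    by (intro minus_unique qspace_add_self)
  then show ?thesis
    by (simp add: diff_conv_add_uminus)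
qed

lemma polar_add_right: "x \<in> fst X \<Longrightarrow> y \<in> fst X \<Longrightarrow> z \<in> fst X \<Longrightarrow>
    polar (snd X) z (x + y) = polar (snd X) z x + polar (snd X) z y"
  using polar_add_left polar_commute by metis

lemma polar_self: "x \<in> fst X \<Longrightarrow> polar (snd X) x x = 0"
  by (simp add: polar_def qspace_add_self qspace_form_zero)

end

definition nondeg_subspace :: "'a::ab_group_add qspace \<Rightarrow> 'a set \<Rightarrow> bool" where
  "nondeg_subspace X U \<longleftrightarrow> U \<subseteq> fst X \<and> 0 \<in> U \<and> (\<forall>s\<in>U. \<forall>t\<in>U. s + t \<in> U) \<and>
     (\<forall>s\<in>U. (\<forall>t\<in>U. polar (snd X) s t = 0) \<longrightarrow> s = 0)"

text \<open>For a hyperbolic pair, \<open>polar q a b = 1\<close>, this is the orthogonal projection onto the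
  complement of the plane spanned by \<open>a\<close> and \<open>b\<close>.\<close>

definition hyp_proj :: "('a \<Rightarrow> bit) \<Rightarrow> 'a \<Rightarrow> 'a \<Rightarrow> 'a \<Rightarrow> 'a::ab_group_add" where
  "hyp_proj q a b t = t + (if polar q t b = 1 then a else 0) + (if polar q t a = 1 then b else 0)"

lemma hyp_proj_closed:
  assumes "0 \<in> U" "\<forall>s\<in>U. \<forall>t\<in>U. s + t \<in> U" "a \<in> U" "b \<in> U" "t \<in> U"
  shows "hyp_proj q a b t \<in> U"
  using assms by (simp add: hyp_proj_def)

lemma polar_hyp_proj:
  assumes X: "is_qspace X" and "a \<in> fst X" "b \<in> fst X" "s \<in> fst X" "t \<in> fst X"
  shows "polar (snd X) s (hyp_proj (snd X) a b t) =
    polar (snd X) s t + polar (snd X) t b * polar (snd X) s a + polar (snd X) t a * polar (snd X) s b"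
proof -
  have scale: "polar (snd X) s (if c = 1 then v else 0) = c * polar (snd X) s v" for c v
    by (cases c) (simp_all add: polar_zero_right qspace_form_zero[OF X])
  let ?a = "if polar (snd X) t b = 1 then a else 0" and ?b = "if polar (snd X) t a = 1 then b else 0"
  have "?a \<in> fst X" "?b \<in> fst X"
    using assms by (simp_all add: qspace_zero_mem)
  then have "polar (snd X) s (t + ?a + ?b) = polar (snd X) s t + polar (snd X) s ?a + polar (snd X) s ?b"
    using assms by (simp add: polar_add_right qspace_add_mem)
  then show ?thesis
    by (simp only: hyp_proj_def scale)
qed

context
  fixes X :: "'a::ab_group_add qspace" and a b :: 'a
  assumes X: "is_qspace X" and a: "a \<in> fst X" and b: "b \<in> fst X"
    and hyperbolic: "polar (snd X) a b = 1"
begin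

lemma polar_hyp_proj_left: "t \<in> fst X \<Longrightarrow> polar (snd X) a (hyp_proj (snd X) a b t) = 0"
  and polar_hyp_proj_right: "t \<in> fst X \<Longrightarrow> polar (snd X) b (hyp_proj (snd X) a b t) = 0"
  using a b hyperbolic polar_commute[of "snd X" b a] polar_commute[of "snd X" t]
  by (simp_all add: polar_hyp_proj[OF X] polar_self[OF X])

lemma polar_hyp_proj_orth:
  "s \<in> fst X \<Longrightarrow> t \<in> fst X \<Longrightarrow> polar (snd X) a s = 0 \<Longrightarrow> polar (snd X) b s = 0 \<Longrightarrow>
    polar (snd X) s (hyp_proj (snd X) a b t) = polar (snd X) s t"
  using a b polar_commute[of "snd X" s a] polar_commute[of "snd X" s b]
  by (simp add: polar_hyp_proj[OF X])

end

lemma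
  assumes X: "is_qspace X" and U: "nondeg_subspace X U" and "a \<in> U" "b \<in> U"
    and hyperbolic: "polar (snd X) a b = 1"
  defines "U' \<equiv> {s \<in> U. polar (snd X) a s = 0 \<and> polar (snd X) b s = 0}"
  shows nondeg_subspace_hyp_compl: "nondeg_subspace X U'"
    and hyp_proj_mem_hyp_compl: "t \<in> U \<Longrightarrow> hyp_proj (snd X) a b t \<in> U'"
proof -
  have sub: "U \<subseteq> fst X" and zero: "0 \<in> U" and add: "\<forall>s\<in>U. \<forall>t\<in>U. s + t \<in> U"
    and nondeg: "\<forall>s\<in>U. (\<forall>t\<in>U. polar (snd X) s t = 0) \<longrightarrow> s = 0"
    using U by (simp_all add: nondeg_subspace_def)
  have a: "a \<in> fst X" and b: "b \<in> fst X"
    using assms sub by auto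
  show proj: "hyp_proj (snd X) a b t \<in> U'" if "t \<in> U" for t
    using that assms sub
    by (auto simp: U'_def hyp_proj_closed[OF zero add] polar_hyp_proj_left[OF X a b]
        polar_hyp_proj_right[OF X a b])
  have "s + t \<in> U'" if "s \<in> U'" "t \<in> U'" for s t
  proof -
    have "s \<in> fst X" "t \<in> fst X"
      using that sub by (auto simp: U'_def)
    then show ?thesis
      using that add a b by (simp add: U'_def polar_add_right[OF X])
  qed
  moreover have "s = 0" if s: "s \<in> U'" and orth: "\<forall>t\<in>U'. polar (snd X) s t = 0" for s
  proof -
    have "polar (snd X) s t = 0" if t: "t \<in> U" for t
    proof -
      have "polar (snd X) s t = polar (snd X) s (hyp_proj (snd X) a b t)"
        using s t sub by (simp add: U'_def polar_hyp_proj_orth[OF X a b hyperbolic] subset_iff)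
      also have "\<dots> = 0"
        using orth proj[OF t] by blast
      finally show ?thesis .
    qed
    then show ?thesis
      using nondeg s by (simp add: U'_def)
  qed
  ultimately show "nondeg_subspace X U'"
    using sub zero X by (auto simp: nondeg_subspace_def U'_def polar_zero_right qspace_form_zero)
qed

lemma orth_decomp_hyp_compl_step:
  assumes X: "is_qspace X" and U: "nondeg_subspace X U" and a: "a \<in> U" and b: "b \<in> U"
    and hyperbolic: "polar (snd X) a b = 1" and x: "x \<in> fst X"
  defines "U' \<equiv> {s \<in> U. polar (snd X) a s = 0 \<and> polar (snd X) b s = 0}"
  assumes decomp': "\<exists>u'\<in>U'. \<forall>t\<in>U'. polar (snd X) (x + u') t = 0"
  shows "\<exists>u\<in>U. \<forall>t\<in>U. polar (snd X) (x + u) t = 0"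
proof -
  have sub: "U \<subseteq> fst X" and zero: "0 \<in> U" and add: "\<forall>s\<in>U. \<forall>t\<in>U. s + t \<in> U"
    using U by (simp_all add: nondeg_subspace_def)
  have aX: "a \<in> fst X" and bX: "b \<in> fst X"
    using a b sub by auto
  obtain u' where u': "u' \<in> U'" and orth': "\<forall>t\<in>U'. polar (snd X) (x + u') t = 0"
    using decomp' by blast
  have yX: "x + u' \<in> fst X"
    using u' sub x by (auto simp: U'_def intro: qspace_add_mem[OF X])
  define p where "p = hyp_proj (snd X) a b (x + u')"
  have pX: "p \<in> fst X"
    using hyp_proj_closed[OF qspace_zero_mem[OF X] _ aX bX yX] X by (simp add: p_def qspace_add_mem)
  have p_orth: "polar (snd X) a p = 0" "polar (snd X) b p = 0"
    unfolding p_def using polar_hyp_proj_left[OF X aX bX hyperbolic yX]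
      polar_hyp_proj_right[OF X aX bX hyperbolic yX] .
  define u where "u = u' + (p - (x + u'))"
  have "p - (x + u') \<in> U"
    using a b zero add by (simp add: p_def hyp_proj_def)
  then have "u \<in> U"
    using u' add unfolding u_def U'_def by blast
  moreover have "polar (snd X) (x + u) t = 0" if t: "t \<in> U" for t
  proof -
    have tX: "t \<in> fst X" and pt: "hyp_proj (snd X) a b t \<in> U'"
      using t sub hyp_proj_mem_hyp_compl[OF X U a b hyperbolic t] by (auto simp: U'_def)
    then have ptX: "hyp_proj (snd X) a b t \<in> fst X"
      using sub by (auto simp: U'_def)
    have "polar (snd X) p t = polar (snd X) p (hyp_proj (snd X) a b t)"
      using polar_hyp_proj_orth[OF X aX bX hyperbolic pX tX p_orth] by simp
    also have "\<dots> = polar (snd X) (hyp_proj (snd X) a b t) (x + u')"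
      using polar_hyp_proj_orth[OF X aX bX hyperbolic ptX yX] pt
        polar_commute[of "snd X" p "hyp_proj (snd X) a b t"]
      by (simp add: U'_def p_def)
    also have "\<dots> = 0"
      using orth' pt polar_commute by metis
    finally show ?thesis
      by (simp add: u_def)
  qed
  ultimately show ?thesis
    by blast
qed

lemma nondeg_subspace_orth_decomp:
  assumes X: "is_qspace X" and "nondeg_subspace X U" and "x \<in> fst X"
  shows "\<exists>u\<in>U. \<forall>t\<in>U. polar (snd X) (x + u) t = 0"
  using assms(2,3)
proof (induction "card U" arbitrary: U x rule: less_induct)
  case (less U x)
  have sub: "U \<subseteq> fst X" and zero: "0 \<in> U"
    and nondeg: "\<forall>s\<in>U. (\<forall>t\<in>U. polar (snd X) s t = 0) \<longrightarrow> s = 0"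
    using less.prems(1) by (simp_all add: nondeg_subspace_def)
  show ?case
  proof (cases "U = {0}")
    case True
    then show ?thesis
      using X by (simp add: polar_zero_right qspace_form_zero)
  next
    case False
    then obtain a where a: "a \<in> U" "a \<noteq> 0"
      using zero by blast
    then obtain b where b: "b \<in> U" and hyperbolic: "polar (snd X) a b = 1"
      using nondeg by (metis bit_not_one_iff)
    define U' where "U' = {s \<in> U. polar (snd X) a s = 0 \<and> polar (snd X) b s = 0}"
    have "a \<notin> U'"
      using hyperbolic polar_commute[of "snd X" b a] by (simp add: U'_def)
    then have "card U' < card U"
      using a(1) finite_subset[OF sub qspace_finite[OF X]]
      by (intro psubset_card_mono) (auto simp only: U'_def)
    moreover have "nondeg_subspace X U'"
      unfolding U'_def using nondeg_subspace_hyp_compl[OF X less.prems(1) a(1) b hyperbolic] .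
    ultimately have "\<exists>u'\<in>U'. \<forall>t\<in>U'. polar (snd X) (x + u') t = 0"
      using less.hyps less.prems(2) by blast
    then show ?thesis
      unfolding U'_def by (rule orth_decomp_hyp_compl_step[OF X less.prems(1) a(1) b hyperbolic less.prems(2)])
  qed
qed

lemma qmor_mem: "qmor V X f \<Longrightarrow> v \<in> fst V \<Longrightarrow> f v \<in> fst X"
  and qmor_inj_on: "qmor V X f \<Longrightarrow> inj_on f (fst V)"
  and qmor_add: "qmor V X f \<Longrightarrow> v \<in> fst V \<Longrightarrow> v' \<in> fst V \<Longrightarrow> f (v + v') = f v + f v'"
  and qmor_form: "qmor V X f \<Longrightarrow> v \<in> fst V \<Longrightarrow> snd X (f v) = snd V v"
  by (auto simp: qmor_def)

lemma qmor_inv_into_apply: "qmor V X f \<Longrightarrow> v \<in> fst V \<Longrightarrow> inv_into (fst V) f (f v) = v"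
  by (simp add: qmor_inj_on inv_into_f_f)

lemma qmor_zero: "is_qspace V \<Longrightarrow> qmor V X f \<Longrightarrow> f 0 = 0"
  using qmor_add[of V X f 0 0] by (simp add: qspace_zero_mem)

lemma qmor_polar:
  assumes "is_qspace V" "qmor V X f" "v \<in> fst V" "v' \<in> fst V"
  shows "polar (snd X) (f v) (f v') = polar (snd V) v v'"
  using assms by (simp add: polar_def qmor_form qspace_add_mem flip: qmor_add)

lemma nondeg_subspace_qmor_image:
  assumes W: "nd_qspace W" and g: "qmor W X g"
  shows "nondeg_subspace X (g ` fst W)"
proof -
  have Wq: "is_qspace W" and Wn: "nondeg W"
    using W by (simp_all add: nd_qspace_def)
  have "g w = 0" if w: "w \<in> fst W" and orth: "\<forall>t\<in>g ` fst W. polar (snd X) (g w) t = 0" for w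
  proof -
    have "\<forall>w'\<in>fst W. polar (snd W) w w' = 0"
      using orth w by (simp add: qmor_polar[OF Wq g])
    then have "w = 0"
      using Wn w unfolding nondeg_def by blast
    then show ?thesis
      using qmor_zero[OF Wq g] by simp
  qed
  moreover have "g w + g w' \<in> g ` fst W" if "w \<in> fst W" "w' \<in> fst W" for w w'
    using that by (simp add: qspace_add_mem[OF Wq] flip: qmor_add[OF g])
  ultimately show ?thesis
    using g qmor_zero[OF Wq g] qspace_zero_mem[OF Wq]
    by (force simp: nondeg_subspace_def qmor_def)
qed

text \<open>The \<open>W\<close>-coordinate of \<open>x\<close> in \<open>X = g(W) \<perp> orth_compl W X g\<close>.\<close>

definition orth_coord :: "'w qspace \<Rightarrow> 'x::ab_group_add qspace \<Rightarrow> ('w \<Rightarrow> 'x) \<Rightarrow> 'x \<Rightarrow> 'w" where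
  "orth_coord W X g x = (THE w. w \<in> fst W \<and> x - g w \<in> orth_compl W X g)"

lemma pp_left_eq: "pp_left W X g x = (orth_coord W X g x, x - g (orth_coord W X g x), 0)"
  by (simp add: pp_left_def orth_coord_def Let_def)

lemma pp_right_eq: "pp_right W Y h y = (orth_coord W Y h y, 0, y - h (orth_coord W Y h y))"
  by (simp add: pp_right_def orth_coord_def Let_def)

lemma inj_pp_left: "inj (pp_left W X g)"
  by (rule injI) (metis pp_left_eq prod.inject diff_add_cancel)

lemma inj_pp_right: "inj (pp_right W Y h)"
  by (rule injI) (metis pp_right_eq prod.inject diff_add_cancel)

context
  fixes W :: "'w::ab_group_add qspace" and X :: "'x::ab_group_add qspace" and g :: "'w \<Rightarrow> 'x"
  assumes X: "is_qspace X" and W: "nd_qspace W" and g: "qmor W X g"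
begin

lemma orth_compl_decomp_unique:
  assumes x: "x \<in> fst X" and w: "w \<in> fst W" "w' \<in> fst W"
    and compl: "x - g w \<in> orth_compl W X g" "x - g w' \<in> orth_compl W X g"
  shows "w = w'"
proof -
  have Wq: "is_qspace W"
    using W by (simp add: nd_qspace_def)
  have "polar (snd W) (w + w') t = 0" if t: "t \<in> fst W" for t
  proof -
    have "polar (snd X) x (g t) + polar (snd X) (g w) (g t)
        = polar (snd X) x (g t) + polar (snd X) (g w') (g t)"
      using compl t x w qmor_mem[OF g]
      by (simp add: orth_compl_def qspace_diff_eq_add[OF X] polar_add_left[OF X])
    then have "polar (snd X) (g w) (g t) = polar (snd X) (g w') (g t)"
      by (rule add_left_imp_eq)
    then show ?thesis
      using t w by (simp add: qmor_polar[OF Wq g] polar_add_left[OF Wq])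
  qed
  then have "w + w' = 0"
    using W w by (simp add: nd_qspace_def nondeg_def qspace_add_mem[OF Wq])
  then show ?thesis
    using qspace_add_self[OF Wq w(2)] by (metis add_right_cancel)
qed

lemma ex1_orth_compl_decomp:
  assumes x: "x \<in> fst X"
  shows "\<exists>!w. w \<in> fst W \<and> x - g w \<in> orth_compl W X g"
proof -
  obtain u where u: "u \<in> g ` fst W" and orth: "\<forall>t\<in>g ` fst W. polar (snd X) (x + u) t = 0"
    using nondeg_subspace_orth_decomp[OF X nondeg_subspace_qmor_image[OF W g] x] by blast
  then obtain w where w: "w \<in> fst W" "u = g w"
    by blast
  have "x - g w \<in> orth_compl W X g"
    using orth w x qmor_mem[OF g]
    by (simp add: orth_compl_def qspace_diff_eq_add[OF X] qspace_add_mem[OF X])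
  then show ?thesis
    using w x orth_compl_decomp_unique by blast
qed

lemma orth_coord_mem: "x \<in> fst X \<Longrightarrow> orth_coord W X g x \<in> fst W"
  unfolding orth_coord_def using theI'[OF ex1_orth_compl_decomp] by blast

lemma orth_coord_apply: "w \<in> fst W \<Longrightarrow> orth_coord W X g (g w) = w"
  unfolding orth_coord_def
  by (rule the1_equality[OF ex1_orth_compl_decomp])
    (simp_all add: qmor_mem[OF g] orth_compl_def qspace_form_zero[OF X] polar_zero_left
      qspace_zero_mem[OF X])

end

lemma inv_into_inv_into_apply:
  "inj_on g W \<Longrightarrow> A \<subseteq> g ` W \<Longrightarrow> w \<in> W \<Longrightarrow> g w \<in> A \<Longrightarrow> inv_into A (inv_into W g) w = g w"
  by (simp add: inv_into_f_eq inj_on_inv_into)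

lemma inv_into_image_Int_image:
  "inj_on g W \<Longrightarrow> inv_into W g ` (A \<inter> g ` W) = {w \<in> W. g w \<in> A}"
  by (auto simp: image_iff) (metis IntI image_eqI inv_into_f_f)

lemma inv_into_map_prod:
  assumes "inj_on f A" "inj_on g B" "x \<in> f ` A" "y \<in> g ` B"
  shows "inv_into (A \<times> B) (map_prod f g) (x, y) = (inv_into A f x, inv_into B g y)"
  using assms by (intro inv_into_f_eq map_prod_inj_on) (auto simp: inv_into_into f_inv_into_f)

lemma is_qspace_restrict:
  assumes X: "is_qspace X" and "S \<subseteq> fst X" "0 \<in> S" "\<forall>x\<in>S. \<forall>y\<in>S. x + y \<in> S"
  shows "is_qspace (S, snd X)"
  using assms finite_subset[OF _ qspace_finite[OF X]]
  by (auto simp: is_qspace_def f2space_def qspace_form_zero[OF X] qspace_add_self[OF X]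
      polar_add_left[OF X] subset_iff)

lemma qmor_image_add_closed:
  assumes "is_qspace V" "qmor V X f" "x \<in> f ` fst V" "y \<in> f ` fst V"
  shows "x + y \<in> f ` fst V"
  using assms by (auto simp: qspace_add_mem simp flip: qmor_add)

lemma is_qspace_pullback_obj:
  assumes X: "is_qspace X" and V: "is_qspace V" and W: "is_qspace W"
    and f: "qmor V X f" and g: "qmor W X g"
  shows "is_qspace (pullback_obj X (fst V) f (fst W) g)"
  unfolding pullback_obj_def
proof (rule is_qspace_restrict[OF X])
  show "f ` fst V \<inter> g ` fst W \<subseteq> fst X"
    using f by (auto simp: qmor_def)
  show "0 \<in> f ` fst V \<inter> g ` fst W"
    using qmor_zero[OF V f] qmor_zero[OF W g] qspace_zero_mem[OF V] qspace_zero_mem[OF W]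
    by (metis IntI image_eqI)
  show "\<forall>x\<in>f ` fst V \<inter> g ` fst W. \<forall>y\<in>f ` fst V \<inter> g ` fst W. x + y \<in> f ` fst V \<inter> g ` fst W"
    using qmor_image_add_closed[OF V f] qmor_image_add_closed[OF W g] by blast
qed

lemma qmor_inv_into:
  assumes V: "is_qspace V" and f: "qmor V X f" and A: "A \<subseteq> f ` fst V"
  shows "qmor (A, snd X) V (inv_into (fst V) f)"
  unfolding qmor_def fst_conv snd_conv
proof (intro conjI ballI)
  show "inv_into (fst V) f ` A \<subseteq> fst V" "inj_on (inv_into (fst V) f) A"
    using A by (auto intro: inv_into_into inj_on_inv_into)
  fix x y assume "x \<in> A" "y \<in> A"
  then obtain v v' where "v \<in> fst V" "v' \<in> fst V" "x = f v" "y = f v'"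
    using A by blast
  then show "inv_into (fst V) f (x + y) = inv_into (fst V) f x + inv_into (fst V) f y"
    and "snd V (inv_into (fst V) f x) = snd X x"
    by (simp_all add: qmor_inv_into_apply[OF f] qmor_form[OF f] qspace_add_mem[OF V]
        flip: qmor_add[OF f])
qed

lemma is_Sq_span_sigma:
  assumes "is_Tq_cospan V W (f, X, g)"
  shows "is_Sq_span V W (sigma V W (f, X, g))"
proof -
  have V: "is_qspace V" and W: "is_qspace W" and X: "is_qspace X" and f: "qmor V X f" and g: "qmor W X g"
    using assms by (auto simp: is_Tq_cospan_def nd_qspace_def)
  show ?thesis
    using assms is_qspace_pullback_obj[OF X V W f g] qmor_inv_into[OF V f] qmor_inv_into[OF W g]
    by (auto simp: is_Sq_span_def is_Tq_cospan_def sigma_def pullback_obj_def)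
qed

lemma span_iso_sigma_cospan_step:
  assumes c: "is_Tq_cospan V W (f, X, g)" and c': "is_Tq_cospan V W (f', X', g')"
    and step: "cospan_step V W (f, X, g) (f', X', g')"
  shows "span_iso (sigma V W (f, X, g)) (sigma V W (f', X', g'))"
proof -
  have f: "qmor V X f" and g: "qmor W X g" and f': "qmor V X' f'" and g': "qmor W X' g'"
    using c c' by (auto simp: is_Tq_cospan_def)
  obtain \<phi> where \<phi>: "qmor X X' \<phi>" and \<phi>f: "\<forall>v\<in>fst V. \<phi> (f v) = f' v"
    and \<phi>g: "\<forall>w\<in>fst W. \<phi> (g w) = g' w"
    using step by (auto simp: cospan_step_def)
  define S where "S = f ` fst V \<inter> g ` fst W"
  define S' where "S' = f' ` fst V \<inter> g' ` fst W"
  have S: "S \<subseteq> fst X"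
    using f by (auto simp: S_def qmor_def)
  have "\<phi> ` S = S'"
  proof
    show "\<phi> ` S \<subseteq> S'"
      using \<phi>f \<phi>g by (auto simp: S_def S'_def)
    show "S' \<subseteq> \<phi> ` S"
    proof
      fix y assume "y \<in> S'"
      then obtain v w where vw: "v \<in> fst V" "w \<in> fst W" "y = f' v" "y = g' w"
        by (auto simp: S'_def)
      then have "f v = g w"
        using \<phi>f \<phi>g qmor_mem[OF f] qmor_mem[OF g] inj_onD[OF qmor_inj_on[OF \<phi>]] by metis
      then show "y \<in> \<phi> ` S"
        using vw \<phi>f unfolding S_def by (metis IntI image_eqI)
    qed
  qed
  then have bij: "bij_betw \<phi> S S'"
    using inj_on_subset[OF qmor_inj_on[OF \<phi>] S] by (simp add: bij_betw_def)
  have "qmor (S, snd X) (S', snd X') \<phi>"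
    using bij \<phi> S by (auto simp: qmor_def bij_betw_def subset_iff)
  moreover have "inv_into (fst V) f' (\<phi> x) = inv_into (fst V) f x \<and>
      inv_into (fst W) g' (\<phi> x) = inv_into (fst W) g x" if "x \<in> S" for x
  proof -
    obtain v w where "v \<in> fst V" "w \<in> fst W" "x = f v" "x = g w"
      using \<open>x \<in> S\<close> by (auto simp: S_def)
    then show ?thesis
      using \<phi>f \<phi>g by (metis qmor_inv_into_apply f g f' g')
  qed
  ultimately show ?thesis
    using bij by (auto simp: span_iso_def sigma_def pullback_obj_def S_def S'_def)
qed

lemma span_iso_sigma_id_cospan:
  "span_iso (sigma V V (id_cospan V)) (id_span V)"
proof -
  have "inv_into (fst V) id v = v" if "v \<in> fst V" for v
    using that by (simp add: inv_into_f_eq)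
  then show ?thesis
    by (auto simp: span_iso_def sigma_def pullback_obj_def id_cospan_def id_span_def qmor_def
        intro!: exI[of _ id])
qed

lemma span_iso_sigma_cospan_sum:
  assumes c1: "is_Tq_cospan V1 W1 (f1, X1, g1)" and c2: "is_Tq_cospan V2 W2 (f2, X2, g2)"
  shows "span_iso (sigma (orth_sum V1 V2) (orth_sum W1 W2) (cospan_sum (f1, X1, g1) (f2, X2, g2)))
    (span_sum (sigma V1 W1 (f1, X1, g1)) (sigma V2 W2 (f2, X2, g2)))"
proof -
  have inj: "inj_on f1 (fst V1)" "inj_on g1 (fst W1)" "inj_on f2 (fst V2)" "inj_on g2 (fst W2)"
    using c1 c2 by (auto simp: is_Tq_cospan_def qmor_def)
  have apex: "map_prod f1 f2 ` (fst V1 \<times> fst V2) \<inter> map_prod g1 g2 ` (fst W1 \<times> fst W2)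
      = (f1 ` fst V1 \<inter> g1 ` fst W1) \<times> (f2 ` fst V2 \<inter> g2 ` fst W2)"
    by (auto simp: map_prod_surj_on)
  show ?thesis
    unfolding span_iso_def sigma_def pullback_obj_def cospan_sum_def span_sum_def orth_sum_def
      prod.case fst_conv snd_conv apex
    using inj by (auto simp: qmor_def inv_into_map_prod intro!: exI[of _ id] intro: rev_image_eqI)
qed

lemma pp_left_apply:
  "is_qspace X \<Longrightarrow> nd_qspace W \<Longrightarrow> qmor W X g \<Longrightarrow> w \<in> fst W \<Longrightarrow> pp_left W X g (g w) = (w, 0, 0)"
  by (simp add: pp_left_eq orth_coord_apply)

lemma pp_right_apply:
  "is_qspace Y \<Longrightarrow> nd_qspace W \<Longrightarrow> qmor W Y h \<Longrightarrow> w \<in> fst W \<Longrightarrow> pp_right W Y h (h w) = (w, 0, 0)"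
  by (simp add: pp_right_eq orth_coord_apply)

lemma pp_left_image_Int_pp_right_image:
  assumes X: "is_qspace X" and Y: "is_qspace Y" and W: "nd_qspace W"
    and g: "qmor W X g" and h: "qmor W Y h" and A: "A \<subseteq> fst X" and B: "B \<subseteq> fst Y"
  shows "pp_left W X g ` A \<inter> pp_right W Y h ` B = (\<lambda>w. (w, 0, 0)) ` {w \<in> fst W. g w \<in> A \<and> h w \<in> B}"
proof
  show "pp_left W X g ` A \<inter> pp_right W Y h ` B \<subseteq> (\<lambda>w. (w, 0, 0)) ` {w \<in> fst W. g w \<in> A \<and> h w \<in> B}"
  proof
    fix z assume "z \<in> pp_left W X g ` A \<inter> pp_right W Y h ` B"
    then obtain x y where xy: "x \<in> A" "y \<in> B" "z = pp_left W X g x" "z = pp_right W Y h y"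
      by blast
    define w where "w = orth_coord W X g x"
    have "pp_left W X g x = (w, x - g w, 0)"
      by (simp add: pp_left_eq w_def)
    then have "(w, x - g w, 0) = (orth_coord W Y h y, 0, y - h (orth_coord W Y h y))"
      and z: "z = (w, x - g w, 0)"
      using xy(3,4) pp_right_eq[of W Y h y] by metis+
    then have "x = g w" "y = h w" "z = (w, 0, 0)"
      by auto
    moreover have "w \<in> fst W"
      using xy A unfolding w_def by (auto intro: orth_coord_mem[OF X W g])
    ultimately show "z \<in> (\<lambda>w. (w, 0, 0)) ` {w \<in> fst W. g w \<in> A \<and> h w \<in> B}"
      using xy by auto
  qed
  show "(\<lambda>w. (w, 0, 0)) ` {w \<in> fst W. g w \<in> A \<and> h w \<in> B} \<subseteq> pp_left W X g ` A \<inter> pp_right W Y h ` B"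
    using pp_left_apply[OF X W g] pp_right_apply[OF Y W h] by (auto intro!: image_eqI[OF sym])
qed

lemma inv_into_pp_left_comp:
  assumes "is_qspace X" "nd_qspace W" "qmor W X g" "qmor V X f" "w \<in> fst W" "v \<in> fst V" "g w = f v"
  shows "inv_into (fst V) (pp_left W X g \<circ> f) (w, 0, 0) = v"
  using assms pp_left_apply[of X W g w]
  by (intro inv_into_f_eq comp_inj_on qmor_inj_on[of V X f]) (auto intro: inj_on_subset[OF inj_pp_left])

lemma inv_into_pp_right_comp:
  assumes "is_qspace Y" "nd_qspace W" "qmor W Y h" "qmor U Y k" "w \<in> fst W" "u \<in> fst U" "h w = k u"
  shows "inv_into (fst U) (pp_right W Y h \<circ> k) (w, 0, 0) = u"
  using assms pp_right_apply[of Y W h w]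
  by (intro inv_into_f_eq comp_inj_on qmor_inj_on[of U Y k]) (auto intro: inj_on_subset[OF inj_pp_right])

lemma span_iso_sigma_cospan_comp:
  fixes X :: "'x::ab_group_add qspace" and Y :: "'y::ab_group_add qspace"
  assumes c: "is_Tq_cospan V W (f, X, g)" and d: "is_Tq_cospan W U (h, Y, k)"
  shows "span_iso (sigma V U (cospan_comp W (f, X, g) (h, Y, k)))
    (span_comp W (sigma V W (f, X, g)) (sigma W U (h, Y, k)))"
proof -
  have W: "nd_qspace W" and X: "is_qspace X" and Y: "is_qspace Y"
    and f: "qmor V X f" and g: "qmor W X g" and h: "qmor W Y h" and k: "qmor U Y k"
    using c d by (auto simp: is_Tq_cospan_def nd_qspace_def)
  define E where "E = {w \<in> fst W. g w \<in> f ` fst V \<and> h w \<in> k ` fst U}"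
  have apex: "(pp_left W X g \<circ> f) ` fst V \<inter> (pp_right W Y h \<circ> k) ` fst U = (\<lambda>w. (w, 0, 0)) ` E"
    unfolding E_def image_comp[symmetric]
    using f k by (intro pp_left_image_Int_pp_right_image[OF X Y W g h]) (auto simp: qmor_def)
  have apex': "inv_into (fst W) g ` (f ` fst V \<inter> g ` fst W) \<inter> inv_into (fst W) h ` (h ` fst W \<inter> k ` fst U) = E"
    using inv_into_image_Int_image[OF qmor_inj_on[OF g]] inv_into_image_Int_image[OF qmor_inj_on[OF h]]
    by (auto simp: E_def Int_commute[of "h ` fst W"])
  have "inv_into (fst V) f (inv_into (f ` fst V \<inter> g ` fst W) (inv_into (fst W) g) w) =
      inv_into (fst V) (pp_left W X g \<circ> f) (w, 0, 0::'y) \<and>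
    inv_into (fst U) k (inv_into (h ` fst W \<inter> k ` fst U) (inv_into (fst W) h) w) =
      inv_into (fst U) (pp_right W Y h \<circ> k) (w, 0::'x, 0)" if "w \<in> E" for w
  proof -
    obtain v u where w: "w \<in> fst W" and v: "v \<in> fst V" "g w = f v" and u: "u \<in> fst U" "h w = k u"
      using \<open>w \<in> E\<close> by (auto simp: E_def)
    have "inv_into (f ` fst V \<inter> g ` fst W) (inv_into (fst W) g) w = g w"
      using w v by (intro inv_into_inv_into_apply[OF qmor_inj_on[OF g]]) (auto intro: rev_image_eqI)
    moreover have "inv_into (h ` fst W \<inter> k ` fst U) (inv_into (fst W) h) w = h w"
      using w u by (intro inv_into_inv_into_apply[OF qmor_inj_on[OF h]]) (auto intro: rev_image_eqI)
    moreover have "inv_into (fst V) (pp_left W X g \<circ> f) (w, 0, 0::'y) = v"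
      by (rule inv_into_pp_left_comp[OF X W g f w v])
    moreover have "inv_into (fst U) (pp_right W Y h \<circ> k) (w, 0::'x, 0) = u"
      by (rule inv_into_pp_right_comp[OF Y W h k w u])
    ultimately show ?thesis
      using qmor_inv_into_apply[OF f v(1)] qmor_inv_into_apply[OF k u(1)] by (simp add: v(2) u(2))
  qed
  moreover have "bij_betw fst ((\<lambda>w. (w, 0, 0)) ` E) E"
    by (auto simp: bij_betw_def inj_on_def image_image)
  moreover have "qmor ((\<lambda>w. (w, 0, 0)) ` E, snd (pp_obj W X Y g h)) (E, snd W) fst"
    using X Y by (auto simp: qmor_def inj_on_def pp_obj_def orth_sum_def qspace_form_zero)
  ultimately show ?thesis
    unfolding span_iso_def sigma_def pullback_obj_def cospan_comp_def span_comp_def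
      prod.case fst_conv snd_conv apex apex'
    by (auto intro!: exI[of _ fst])
qed

theorem proposition4p17:
  shows
  \<comment> \<open>sigma sends morphisms of T_q to morphisms of S_q\<close>
  "(\<forall>(V::'v::ab_group_add qspace) (W::'w::ab_group_add qspace) (c::('v,'x::ab_group_add,'w) cospan).
      is_Tq_cospan V W c \<longrightarrow> is_Sq_span V W (sigma V W c))
   \<and>
  \<comment> \<open>sigma is compatible with the equivalence relation defining morphisms of T_q\<close>
   (\<forall>(V::'v qspace) (W::'w qspace) (c::('v,'x,'w) cospan) (c'::('v,'y::ab_group_add,'w) cospan).
      is_Tq_cospan V W c \<longrightarrow> is_Tq_cospan V W c' \<longrightarrow> cospan_step V W c c' \<longrightarrow>
      span_iso (sigma V W c) (sigma V W c'))
   \<and>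
  \<comment> \<open>sigma preserves identities\<close>
   (\<forall>V::'v qspace. nd_qspace V \<longrightarrow> span_iso (sigma V V (id_cospan V)) (id_span V))
   \<and>
  \<comment> \<open>sigma preserves composition\<close>
   (\<forall>(V::'v qspace) (W::'w qspace) (U::'u::ab_group_add qspace)
       (c::('v,'x,'w) cospan) (d::('w,'y,'u) cospan).
      is_Tq_cospan V W c \<longrightarrow> is_Tq_cospan W U d \<longrightarrow>
      span_iso (sigma V U (cospan_comp W c d)) (span_comp W (sigma V W c) (sigma W U d)))
   \<and>
  \<comment> \<open>sigma is (strict) monoidal for the orthogonal sums\<close>
   (\<forall>(V1::'v qspace) (W1::'w qspace) (c1::('v,'x,'w) cospan)
       (V2::'u qspace) (W2::'y qspace) (c2::('u,'z::ab_group_add,'y) cospan).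
      is_Tq_cospan V1 W1 c1 \<longrightarrow> is_Tq_cospan V2 W2 c2 \<longrightarrow>
      span_iso (sigma (orth_sum V1 V2) (orth_sum W1 W2) (cospan_sum c1 c2))
               (span_sum (sigma V1 W1 c1) (sigma V2 W2 c2)))"
proof (intro conjI allI impI)
  fix V W c assume "is_Tq_cospan V W c"
  then show "is_Sq_span V W (sigma V W c)"
    by (cases c) (simp add: is_Sq_span_sigma)
next
  fix V W c c' assume "is_Tq_cospan V W c" "is_Tq_cospan V W c'" "cospan_step V W c c'"
  then show "span_iso (sigma V W c) (sigma V W c')"
    by (cases c, cases c') (simp add: span_iso_sigma_cospan_step)
next
  fix V show "span_iso (sigma V V (id_cospan V)) (id_span V)"
    by (rule span_iso_sigma_id_cospan)
next
  fix V W U c d assume "is_Tq_cospan V W c" "is_Tq_cospan W U d"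
  then show "span_iso (sigma V U (cospan_comp W c d)) (span_comp W (sigma V W c) (sigma W U d))"
    by (cases c, cases d) (simp add: span_iso_sigma_cospan_comp)
next
  fix V1 W1 c1 V2 W2 c2 assume "is_Tq_cospan V1 W1 c1" "is_Tq_cospan V2 W2 c2"
  then show "span_iso (sigma (orth_sum V1 V2) (orth_sum W1 W2) (cospan_sum c1 c2))
      (span_sum (sigma V1 W1 c1) (sigma V2 W2 c2))"
    by (cases c1, cases c2) (simp add: span_iso_sigma_cospan_sum)
qed

end
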